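(* Fix $p,\epsilon\in(0,1)$ and let $G$ be a graph on $n$ vertices. Let $A$ be the set of paths of length $2$ in $G$ that are not $(p,\epsilon)$-admissible. Then \[\sum_{xyz\in A}\frac1{\deg y}<\frac{3n}{2p^2\epsilon},\] where the sum is over unlabeled paths (each path $xyz=zyx$ counted once) and $\deg y$ is the degree of the middle vertex $y$ in $G$.
   Context: For a graph $G$ and a path $wuw'$ of length $2$ in $G$: choose $U\subseteq V(G)\setminus\{u\}$ by including each vertex other than $u$ independently with probability $p$, and let $A_{wuw'}$ be the event that $G$ contains a path $ww_1\cdots w_{k-1}w'$ of length $k\ge 2$ from $w$ to $w'$ with $w_1,\ldots,w_{k-1}\in U$. The path $wuw'$ is $(p,\epsilon)$-admissible if $\Pr[A_{wuw'}]\ge1-\epsilon$. *)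

theory Defs
  imports Complex_Main
begin

definition simple_graph :: "'a set \<Rightarrow> ('a \<Rightarrow> 'a \<Rightarrow> bool) \<Rightarrow> bool" where
  "simple_graph V E \<longleftrightarrow> finite V \<and> (\<forall>x y. E x y \<longrightarrow> x \<in> V \<and> y \<in> V)
     \<and> (\<forall>x y. E x y \<longrightarrow> E y x) \<and> (\<forall>x. \<not> E x x)"

definition degree :: "'a set \<Rightarrow> ('a \<Rightarrow> 'a \<Rightarrow> bool) \<Rightarrow> 'a \<Rightarrow> nat" where
  "degree V E y = card {v \<in> V. E y v}"

definition path2 :: "('a \<Rightarrow> 'a \<Rightarrow> bool) \<Rightarrow> 'a \<Rightarrow> 'a \<Rightarrow> 'a \<Rightarrow> bool" where
  "path2 E w u w' \<longleftrightarrow> w \<noteq> u \<and> u \<noteq> w' \<and> w \<noteq> w' \<and> E w u \<and> E u w'"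

text \<open>Event A_{wuw'} for a given outcome U: there is a path w w_1 ... w_{k-1} w'
(distinct vertices) of length k \<ge> 2 with all interior vertices in U.\<close>
definition event_A :: "('a \<Rightarrow> 'a \<Rightarrow> bool) \<Rightarrow> 'a \<Rightarrow> 'a \<Rightarrow> 'a set \<Rightarrow> bool" where
  "event_A E w w' U \<longleftrightarrow> (\<exists>ws. ws \<noteq> [] \<and> set ws \<subseteq> U \<and> distinct (w # ws @ [w'])
       \<and> successively E (w # ws @ [w']))"

text \<open>Probability of A_{wuw'} when U \<subseteq> V - {u} contains each vertex independently
with probability p.\<close>
definition prob_A :: "'a set \<Rightarrow> ('a \<Rightarrow> 'a \<Rightarrow> bool) \<Rightarrow> real \<Rightarrow> 'a \<Rightarrow> 'a \<Rightarrow> 'a \<Rightarrow> real" where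
  "prob_A V E p w u w' =
     (\<Sum>U\<in>{U. U \<subseteq> V - {u} \<and> event_A E w w' U}.
        p ^ card U * (1 - p) ^ card (V - {u} - U))"

definition admissible :: "'a set \<Rightarrow> ('a \<Rightarrow> 'a \<Rightarrow> bool) \<Rightarrow> real \<Rightarrow> real \<Rightarrow> 'a \<Rightarrow> 'a \<Rightarrow> 'a \<Rightarrow> bool" where
  "admissible V E p \<epsilon> w u w' \<longleftrightarrow> prob_A V E p w u w' \<ge> 1 - \<epsilon>"

text \<open>Unlabeled non-admissible paths of length 2: represented as (middle vertex, set of endpoints).\<close>
definition nonadm_paths :: "'a set \<Rightarrow> ('a \<Rightarrow> 'a \<Rightarrow> bool) \<Rightarrow> real \<Rightarrow> real \<Rightarrow> ('a \<times> 'a set) set" where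
  "nonadm_paths V E p \<epsilon> =
     {(y, {x, z}) | x y z. path2 E x y z \<and> \<not> admissible V E p \<epsilon> x y z}"

end

(* Let W be a random subset of V containing each vertex independently with probability p,
   and call a path xyz unlinked in W if x, y, z are in W and no path of length at least 2
   joins x to z through W - {y}.  A non-admissible path is unlinked in W with probability
   p^3 (1 - Pr[A_xyz]) > p^3 eps.  On the other hand, for every fixed W the unlinked paths
   have total weight at most 3|W|/2.  Root every component of G[W] and call x a child of y
   if deleting y cuts x off from the root.  Unlinked paths with a child x of y as endpoint
   are charged to x: there are at most deg y of them, of weight 1/deg y each.  In every
   other unlinked path xyz the endpoints are adjacent and one of them, w, reaches the root
   only through the edge xz once y is deleted; this path, of weight at most 1/2, is charged
   to w.  A vertex is a child of at most one vertex, is charged by at most two paths of the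
   second kind, and by at most one if it is a child, so it receives at most 3/2.  Taking
   expectations gives p^3 eps * sum < 3pn/2. *)

theory Submission
  imports Defs "HOL-Library.Transitive_Closure_Table"
begin

section \<open>Random subsets\<close>

text \<open>subset_weight p T U is the probability that a random subset of T, containing each
  element independently with probability p, equals U.\<close>
definition subset_weight :: "real \<Rightarrow> 'a set \<Rightarrow> 'a set \<Rightarrow> real" where
  "subset_weight p T U = p ^ card U * (1 - p) ^ card (T - U)"

lemma sum_subset_weight:
  assumes "finite T"
  shows "(\<Sum>U\<in>Pow T. subset_weight p T U) = 1"
  using prod_add[OF assms, of "\<lambda>_. p" "\<lambda>_. 1 - p"] by (simp add: subset_weight_def)

lemma subset_weight_self: "subset_weight p S S = p ^ card S"
  by (simp add: subset_weight_def)

lemma subset_weight_nonneg: "0 \<le> p \<Longrightarrow> p \<le> 1 \<Longrightarrow> 0 \<le> subset_weight p T U"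
  by (simp add: subset_weight_def)

lemma subset_weight_Un:
  assumes "finite T" "S \<subseteq> T" "A \<subseteq> S" "B \<subseteq> T - S"
  shows "subset_weight p T (A \<union> B) = subset_weight p S A * subset_weight p (T - S) B"
proof -
  have "finite S"
    using assms(1,2) by (rule rev_finite_subset)
  then have fin: "finite A" "finite B" "finite (S - A)" "finite (T - S - B)"
    using assms(1,3,4) by (auto intro: rev_finite_subset)
  have "T - (A \<union> B) = (S - A) \<union> (T - S - B)"
    using assms by auto
  moreover have "(S - A) \<inter> (T - S - B) = {}"
    by auto
  ultimately have "card (T - (A \<union> B)) = card (S - A) + card (T - S - B)"
    using card_Un_disjoint[OF fin(3,4)] by simp
  moreover have "card (A \<union> B) = card A + card B"
    using fin assms by (intro card_Un_disjoint) auto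
  ultimately show ?thesis
    by (simp add: subset_weight_def power_add)
qed

lemma sum_Pow_subset_weight_split:
  assumes "finite T" "S \<subseteq> T"
  shows "(\<Sum>U\<in>Pow T. subset_weight p T U * g U) =
    (\<Sum>A\<in>Pow S. \<Sum>B\<in>Pow (T - S). subset_weight p S A * subset_weight p (T - S) B * g (A \<union> B))"
proof -
  have inj: "inj_on (\<lambda>(A, B). A \<union> B) (Pow S \<times> Pow (T - S))"
  proof (rule inj_onI, clarify)
    fix A B A' B'
    assume "A \<subseteq> S" "B \<subseteq> T - S" "A' \<subseteq> S" "B' \<subseteq> T - S" "A \<union> B = A' \<union> B'"
    then have "A = (A' \<union> B') \<inter> S" "A' = (A' \<union> B') \<inter> S" "B = (A' \<union> B') - S" "B' = (A' \<union> B') - S"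
      by blast+
    then show "A = A' \<and> B = B'" by simp
  qed
  have img: "Pow T = (\<lambda>(A, B). A \<union> B) ` (Pow S \<times> Pow (T - S))"
  proof (intro equalityI subsetI)
    fix U assume "U \<in> Pow T"
    then have "U = (U \<inter> S) \<union> (U - S)" "(U \<inter> S, U - S) \<in> Pow S \<times> Pow (T - S)"
      by auto
    then show "U \<in> (\<lambda>(A, B). A \<union> B) ` (Pow S \<times> Pow (T - S))"
      by (metis (no_types, lifting) case_prod_conv image_eqI)
  qed (use assms in auto)
  have "(\<Sum>U\<in>Pow T. subset_weight p T U * g U) = (\<Sum>(A, B)\<in>Pow S \<times> Pow (T - S).
      subset_weight p S A * subset_weight p (T - S) B * g (A \<union> B))"
  proof (rule sum.reindex_cong[OF inj img], clarify)
    fix A B assume "A \<subseteq> S" "B \<subseteq> T - S"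
    then show "subset_weight p T (A \<union> B) * g (A \<union> B) =
        subset_weight p S A * subset_weight p (T - S) B * g (A \<union> B)"
      using subset_weight_Un[OF assms] by simp
  qed
  then show ?thesis
    by (simp add: sum.cartesian_product)
qed

lemma sum_subset_weight_indep:
  assumes "finite T" "S \<subseteq> T" "\<And>U. g U = g (U - S)"
  shows "(\<Sum>U\<in>Pow T. subset_weight p T U * g U) =
    (\<Sum>U\<in>Pow (T - S). subset_weight p (T - S) U * g U)"
proof -
  have "subset_weight p S A * subset_weight p (T - S) B * g (A \<union> B) =
      subset_weight p S A * (subset_weight p (T - S) B * g B)" if "A \<subseteq> S" "B \<subseteq> T - S" for A B
  proof -
    have "A \<union> B - S = B - S" using that by auto
    then show ?thesis using assms(3)[of "A \<union> B"] assms(3)[of B] by simp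
  qed
  then have "(\<Sum>U\<in>Pow T. subset_weight p T U * g U) =
      (\<Sum>A\<in>Pow S. subset_weight p S A * (\<Sum>B\<in>Pow (T - S). subset_weight p (T - S) B * g B))"
    unfolding sum_Pow_subset_weight_split[OF assms(1,2)] sum_distrib_left
    by (intro sum.cong) auto
  also have "\<dots> = (\<Sum>B\<in>Pow (T - S). subset_weight p (T - S) B * g B)"
    using sum_subset_weight[OF finite_subset[OF assms(2,1)], of p]
    by (simp flip: sum_distrib_right)
  finally show ?thesis .
qed

lemma sum_subset_weight_superset:
  assumes "finite T" "S \<subseteq> T"
  shows "(\<Sum>U\<in>Pow T. subset_weight p T U * (if S \<subseteq> U then g (U - S) else 0)) =
    p ^ card S * (\<Sum>U\<in>Pow (T - S). subset_weight p (T - S) U * g U)"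
proof -
  have "subset_weight p S A * subset_weight p (T - S) B * (if S \<subseteq> A \<union> B then g (A \<union> B - S) else 0)
      = (if A = S then subset_weight p S S * (subset_weight p (T - S) B * g B) else 0)"
    if "A \<subseteq> S" "B \<subseteq> T - S" for A B
  proof (cases "A = S")
    case True
    with that have "A \<union> B - S = B" by auto
    with True show ?thesis by simp
  next
    case False
    with that have "\<not> S \<subseteq> A \<union> B" by auto
    with False show ?thesis by simp
  qed
  then have "(\<Sum>U\<in>Pow T. subset_weight p T U * (if S \<subseteq> U then g (U - S) else 0)) =
      (\<Sum>A\<in>Pow S. if A = S then subset_weight p S S *
         (\<Sum>B\<in>Pow (T - S). subset_weight p (T - S) B * g B) else 0)"
    unfolding sum_Pow_subset_weight_split[OF assms] sum_distrib_left
    by (intro sum.cong) auto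
  also have "\<dots> = p ^ card S * (\<Sum>U\<in>Pow (T - S). subset_weight p (T - S) U * g U)"
    using finite_subset[OF assms(2,1)] by (simp add: subset_weight_self)
  finally show ?thesis .
qed

lemma sum_subset_weight_card:
  assumes "finite T"
  shows "(\<Sum>U\<in>Pow T. subset_weight p T U * real (card U)) = p * real (card T)"
proof -
  have "real (card U) = (\<Sum>a\<in>T. if {a} \<subseteq> U then 1 else 0)" if "U \<subseteq> T" for U
  proof -
    have "T \<inter> U = U" using that by blast
    then show ?thesis
      using sum.inter_restrict[OF assms, of "\<lambda>_. 1::real" U] by simp
  qed
  then have "(\<Sum>U\<in>Pow T. subset_weight p T U * real (card U)) =
      (\<Sum>U\<in>Pow T. \<Sum>a\<in>T. subset_weight p T U * (if {a} \<subseteq> U then 1 else 0))"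
    by (intro sum.cong) (auto simp: sum_distrib_left)
  also have "\<dots> = (\<Sum>a\<in>T. \<Sum>U\<in>Pow T. subset_weight p T U * (if {a} \<subseteq> U then 1 else 0))"
    by (rule sum.swap)
  also have "\<dots> = (\<Sum>a\<in>T. p)"
  proof (rule sum.cong)
    fix a assume "a \<in> T"
    then show "(\<Sum>U\<in>Pow T. subset_weight p T U * (if {a} \<subseteq> U then 1 else 0)) = p"
      using sum_subset_weight_superset[OF assms, of "{a}" p "\<lambda>_. 1"] assms
      by (simp add: sum_subset_weight)
  qed simp
  finally show ?thesis by simp
qed

lemma one_minus_prob_A:
  assumes "finite V"
  shows "1 - prob_A V E p x y z =
    (\<Sum>U\<in>Pow (V - {y}). subset_weight p (V - {y}) U * (if event_A E x z U then 0 else 1))"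
proof -
  let ?w = "subset_weight p (V - {y})"
  have fin: "finite (Pow (V - {y}))" using assms by simp
  have events: "{U. U \<subseteq> V - {y} \<and> event_A E x z U} = {U \<in> Pow (V - {y}). event_A E x z U}"
    by auto
  have "prob_A V E p x y z = (\<Sum>U\<in>Pow (V - {y}). ?w U * (if event_A E x z U then 1 else 0))"
    unfolding prob_A_def events sum.inter_filter[OF fin] by (intro sum.cong) (simp_all add: subset_weight_def)
  moreover have "(\<Sum>U\<in>Pow (V - {y}). ?w U * (if event_A E x z U then 0 else 1)) +
      (\<Sum>U\<in>Pow (V - {y}). ?w U * (if event_A E x z U then 1 else 0)) = (\<Sum>U\<in>Pow (V - {y}). ?w U)"
    unfolding sum.distrib[symmetric] by (intro sum.cong) simp_all
  moreover have "(\<Sum>U\<in>Pow (V - {y}). ?w U) = 1"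
    using assms by (simp add: sum_subset_weight)
  ultimately show ?thesis by linarith
qed

section \<open>Walks in induced subgraphs\<close>

definition induced :: "('a \<Rightarrow> 'a \<Rightarrow> bool) \<Rightarrow> 'a set \<Rightarrow> 'a \<Rightarrow> 'a \<Rightarrow> bool" where
  "induced R S a b \<longleftrightarrow> R a b \<and> a \<in> S \<and> b \<in> S"

definition del_edge :: "('a \<Rightarrow> 'a \<Rightarrow> bool) \<Rightarrow> 'a \<Rightarrow> 'a \<Rightarrow> 'a \<Rightarrow> 'a \<Rightarrow> bool" where
  "del_edge R x z a b \<longleftrightarrow> R a b \<and> {a, b} \<noteq> {x, z}"

lemma symp_induced: "symp R \<Longrightarrow> symp (induced R S)"
  by (auto simp: symp_def induced_def)

lemma symp_del_edge: "symp R \<Longrightarrow> symp (del_edge R x z)"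
  by (auto simp: symp_def del_edge_def insert_commute)

lemma rtranclp_induced_sym: "symp R \<Longrightarrow> (induced R S)\<^sup>*\<^sup>* a b \<Longrightarrow> (induced R S)\<^sup>*\<^sup>* b a"
  by (metis symp_induced symp_rtranclp sympD)

lemma rtranclp_induced_mono:
  assumes "\<And>a b. R a b \<Longrightarrow> R' a b" "S \<subseteq> S'" "(induced R S)\<^sup>*\<^sup>* a b"
  shows "(induced R' S')\<^sup>*\<^sup>* a b"
  by (rule mono_rtranclp[rule_format, OF _ assms(3)]) (use assms(1,2) in \<open>auto simp: induced_def\<close>)

lemma rtranclp_induced_ends: "(induced R S)\<^sup>*\<^sup>* a b \<Longrightarrow> a \<noteq> b \<Longrightarrow> a \<in> S \<and> b \<in> S"
  by (metis induced_def converse_rtranclpE rtranclp.cases)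

lemma induced_converse_step:
  "(induced R S)\<^sup>*\<^sup>* b c \<Longrightarrow> R a b \<Longrightarrow> a \<in> S \<Longrightarrow> b \<in> S \<Longrightarrow> (induced R S)\<^sup>*\<^sup>* a c"
  by (metis induced_def converse_rtranclp_into_rtranclp)

text \<open>Cut a walk in S at its last visit to v.\<close>
lemma rtranclp_induced_remove:
  assumes "(induced R S)\<^sup>*\<^sup>* a b"
  shows "(induced R (S - {v}))\<^sup>*\<^sup>* a b \<or> b = v \<or>
    (\<exists>s \<in> S - {v}. R v s \<and> (induced R (S - {v}))\<^sup>*\<^sup>* s b)"
  using assms
proof (induction rule: rtranclp_induct)
  case (step b c)
  show ?case
  proof (cases "c = v")
    case False
    with step.hyps(2) have c: "c \<in> S - {v}" "R b c" "b \<in> S"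
      by (auto simp: induced_def)
    show ?thesis
    proof (cases "b = v")
      case True
      with c show ?thesis by auto
    next
      case False
      with c have "induced R (S - {v}) b c"
        by (simp add: induced_def)
      with step.IH False show ?thesis
        by (meson rtranclp.rtrancl_into_rtrancl)
    qed
  qed simp
qed simp

text \<open>Cut a walk at its last use of the edge xz.\<close>
lemma rtranclp_del_edge:
  assumes "R\<^sup>*\<^sup>* a b"
  shows "(del_edge R x z)\<^sup>*\<^sup>* a b \<or> (del_edge R x z)\<^sup>*\<^sup>* x b \<or> (del_edge R x z)\<^sup>*\<^sup>* z b"
  using assms
proof (induction rule: rtranclp_induct)
  case (step b c)
  show ?case
  proof (cases "{b, c} = {x, z}")
    case True
    then have "c = x \<or> c = z" by (auto simp: doubleton_eq_iff)
    then show ?thesis by auto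
  next
    case False
    with step.hyps(2) have "del_edge R x z b c" by (simp add: del_edge_def)
    with step.IH show ?thesis by (meson rtranclp.rtrancl_into_rtrancl)
  qed
qed simp

lemma del_edge_induced: "del_edge (induced R S) x z = induced (del_edge R x z) S"
  by (auto simp: del_edge_def induced_def fun_eq_iff)

lemma rtranclp_induced_avoid:
  assumes "R\<^sup>*\<^sup>* a b" "a \<notin> T" "\<forall>t\<in>T. \<not> R\<^sup>*\<^sup>* t b"
  shows "(induced R (- T))\<^sup>*\<^sup>* a b"
  using assms
proof (induction rule: converse_rtranclp_induct)
  case (step a a')
  then have "a' \<notin> T" by blast
  with step show ?case by (auto intro: induced_converse_step)
qed simp

lemma rtranclp_induced_del_edge:
  assumes "(induced R S)\<^sup>*\<^sup>* a b"
  obtains "(induced (del_edge R x z) S)\<^sup>*\<^sup>* a b" | "(induced (del_edge R x z) S)\<^sup>*\<^sup>* x b"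
    | "(induced (del_edge R x z) S)\<^sup>*\<^sup>* z b"
  using rtranclp_del_edge[OF assms, of x z] unfolding del_edge_induced by blast

lemma rtranclp_avoiding_del_edge:
  assumes "(induced (induced (del_edge R u w) S) (- T))\<^sup>*\<^sup>* a b" "w' \<in> T" "S - T \<subseteq> S'"
  shows "(induced (del_edge R u' w') S')\<^sup>*\<^sup>* a b"
  by (rule mono_rtranclp[rule_format, OF _ assms(1)])
    (use assms(2,3) in \<open>auto simp: induced_def del_edge_def doubleton_eq_iff\<close>)

lemma rtrancl_path_induced:
  "rtrancl_path (induced R S) a l b \<Longrightarrow> set l \<subseteq> S \<and> successively R (a # l)"
proof (induction rule: rtrancl_path.induct)
  case (step a c l b)
  then show ?case by (cases l) (auto simp: induced_def)
qed simp

lemma event_A_Diff_ends: "event_A E x z (U - {x, z}) = event_A E x z U"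
  unfolding event_A_def by auto

lemma event_A_if_rtranclp:
  assumes "x \<noteq> z" "(induced (del_edge E x z) S)\<^sup>*\<^sup>* x z"
  shows "event_A E x z S"
proof -
  obtain xs where "rtrancl_path (induced (del_edge E x z) S) x xs z"
    using assms(2) rtranclp_eq_rtrancl_path by metis
  then obtain xs' where path: "rtrancl_path (induced (del_edge E x z) S) x xs' z"
    and dist: "distinct (x # xs')"
    using rtrancl_path_distinct by metis
  have "xs' \<noteq> []" using path assms(1) by (cases rule: rtrancl_path.cases) auto
  then obtain ws where xs': "xs' = ws @ [z]"
    using rtrancl_path_last[OF path] by (metis append_butlast_last_id)
  have walk: "set ws \<subseteq> S" "successively (del_edge E x z) (x # ws @ [z])"
    using rtrancl_path_induced[OF path] xs' by auto
  have "ws \<noteq> []"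
  proof
    assume "ws = []"
    with walk(2) show False by (simp add: del_edge_def)
  qed
  moreover have "successively E (x # ws @ [z])"
    using walk(2) by (rule successively_mono) (simp add: del_edge_def)
  ultimately show ?thesis
    unfolding event_A_def using walk(1) dist xs' by auto
qed

section \<open>Unlinked paths in a fixed vertex set\<close>

locale fin_graph =
  fixes V :: "'a set" and E :: "'a \<Rightarrow> 'a \<Rightarrow> bool"
  assumes simple: "simple_graph V E"
begin

lemma finite_V: "finite V"
  using simple by (simp add: simple_graph_def)

lemma edge_in_V: "E a b \<Longrightarrow> a \<in> V \<and> b \<in> V"
  using simple by (simp add: simple_graph_def)

lemma symp_E: "symp E"
  using simple by (auto simp: simple_graph_def symp_def)

lemma edge_sym: "E a b \<Longrightarrow> E b a"
  using symp_E by (rule sympD)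

lemma edge_irrefl: "\<not> E a a"
  using simple by (simp add: simple_graph_def)

lemma card_neighbours_le_degree: "card {z \<in> W. E y z \<and> z \<noteq> x} \<le> degree V E y"
  unfolding degree_def
  by (rule card_mono) (auto simp: finite_V dest: edge_in_V)

lemma two_le_degree: "E y u \<Longrightarrow> E y w \<Longrightarrow> u \<noteq> w \<Longrightarrow> 2 \<le> degree V E y"
proof -
  assume "E y u" "E y w" "u \<noteq> w"
  then have "card {u, w} \<le> degree V E y"
    unfolding degree_def by (intro card_mono) (auto simp: finite_V dest: edge_in_V)
  with \<open>u \<noteq> w\<close> show ?thesis by simp
qed

text \<open>The choice in root depends only on the component of v (root_eq), so every component
  of the subgraph induced by W gets a single root.\<close>
definition root :: "'a set \<Rightarrow> 'a \<Rightarrow> 'a" where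
  "root W v = (SOME r. r \<in> W \<and> (induced E W)\<^sup>*\<^sup>* v r)"

definition children :: "'a set \<Rightarrow> 'a \<Rightarrow> 'a set" where
  "children W y = {x \<in> W. E y x \<and> \<not> (induced E (W - {y}))\<^sup>*\<^sup>* x (root W y)}"

definition parents :: "'a set \<Rightarrow> 'a \<Rightarrow> 'a set" where
  "parents W x = {y \<in> W. x \<in> children W y}"

definition bridge_pairs :: "'a set \<Rightarrow> 'a \<Rightarrow> ('a \<times> 'a) set" where
  "bridge_pairs W w = {(y, u). y \<in> W \<and> u \<in> W \<and> w \<in> W \<and> E y u \<and> E y w \<and> E u w \<and>
     u \<notin> children W y \<and> w \<notin> children W y \<and>
     \<not> (induced (del_edge E u w) (W - {y}))\<^sup>*\<^sup>* w (root W y)}"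

definition unlinked_paths :: "'a set \<Rightarrow> ('a \<times> 'a set) set" where
  "unlinked_paths W = {(y, {x, z}) | x y z. path2 E x y z \<and> x \<in> W \<and> y \<in> W \<and> z \<in> W \<and>
     \<not> event_A E x z (W - {y})}"

lemma root_reachable: "v \<in> W \<Longrightarrow> root W v \<in> W \<and> (induced E W)\<^sup>*\<^sup>* v (root W v)"
  unfolding root_def by (rule someI[of _ v]) simp

lemma root_eq:
  assumes "(induced E W)\<^sup>*\<^sup>* u v"
  shows "root W u = root W v"
proof -
  have "(\<lambda>r. r \<in> W \<and> (induced E W)\<^sup>*\<^sup>* u r) = (\<lambda>r. r \<in> W \<and> (induced E W)\<^sup>*\<^sup>* v r)"
    using assms rtranclp_induced_sym[OF symp_E] by (meson rtranclp_trans)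
  then show ?thesis unfolding root_def by simp
qed

lemma root_edge: "E u v \<Longrightarrow> u \<in> W \<Longrightarrow> v \<in> W \<Longrightarrow> root W u = root W v"
  by (rule root_eq) (auto simp: induced_def)

lemma child_not_adjacent_root:
  assumes "x \<in> children W y" "y \<in> W" "root W y \<noteq> y"
  shows "\<not> E x (root W y)"
proof
  assume "E x (root W y)"
  with assms root_reachable[of y W] edge_irrefl have "induced E (W - {y}) x (root W y)"
    by (auto simp: children_def induced_def)
  then have "(induced E (W - {y}))\<^sup>*\<^sup>* x (root W y)" ..
  with assms(1) show False by (simp add: children_def)
qed

lemma children_unique:
  assumes "z \<in> children W y" "z \<in> children W y'" "y \<in> W" "y' \<in> W"
  shows "y = y'"
proof (rule ccontr)
  assume ne: "y \<noteq> y'"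
  let ?r = "root W y"
  from assms have z: "z \<in> W" "E y z" "E y' z" and n1: "\<not> (induced E (W - {y}))\<^sup>*\<^sup>* z ?r"
    and n2': "\<not> (induced E (W - {y'}))\<^sup>*\<^sup>* z (root W y')"
    by (auto simp: children_def)
  have "root W y' = ?r"
    using root_edge[of y z W] root_edge[of y' z W] z assms(3,4) by simp
  with n2' have n2: "\<not> (induced E (W - {y'}))\<^sup>*\<^sup>* z ?r" by simp
  have zy: "z \<noteq> y" "z \<noteq> y'" using z edge_irrefl by auto
  have "?r \<noteq> y'"
    using child_not_adjacent_root[OF assms(1,3)] ne z(3) edge_sym by metis
  have "?r \<noteq> y"
    using child_not_adjacent_root[OF assms(2,4)] \<open>root W y' = ?r\<close> ne z(2) edge_sym by metis
  have reach: "(induced E W)\<^sup>*\<^sup>* z ?r"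
    using root_reachable[OF z(1)] root_edge[of y z W] z assms(3) by simp
  with rtranclp_induced_remove[OF reach, of y] n1 \<open>?r \<noteq> y\<close> obtain s
    where s: "s \<in> W - {y}" "E y s" "(induced E (W - {y}))\<^sup>*\<^sup>* s ?r"
    by blast
  from rtranclp_induced_remove[OF s(3), of y'] \<open>?r \<noteq> y'\<close> show False
  proof (elim disjE bexE conjE)
    assume h: "(induced E (W - {y} - {y'}))\<^sup>*\<^sup>* s ?r"
    have "s \<noteq> y'"
      using rtranclp_induced_ends[OF h] \<open>?r \<noteq> y'\<close> by auto
    have "(induced E (W - {y'}))\<^sup>*\<^sup>* s ?r"
      by (rule rtranclp_induced_mono[OF _ _ h]) auto
    then have "(induced E (W - {y'}))\<^sup>*\<^sup>* y ?r"
      by (rule induced_converse_step) (use s \<open>s \<noteq> y'\<close> assms(3) ne in auto)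
    then have "(induced E (W - {y'}))\<^sup>*\<^sup>* z ?r"
      by (rule induced_converse_step) (use z zy assms(3) ne edge_sym in auto)
    with n2 show False by simp
  next
    fix s' assume h: "s' \<in> W - {y} - {y'}" "E y' s'" "(induced E (W - {y} - {y'}))\<^sup>*\<^sup>* s' ?r"
    have "(induced E (W - {y}))\<^sup>*\<^sup>* s' ?r"
      by (rule rtranclp_induced_mono[OF _ _ h(3)]) auto
    then have "(induced E (W - {y}))\<^sup>*\<^sup>* y' ?r"
      by (rule induced_converse_step) (use h assms(4) ne in auto)
    then have "(induced E (W - {y}))\<^sup>*\<^sup>* z ?r"
      by (rule induced_converse_step) (use z zy assms(4) ne edge_sym in auto)
    with n1 show False by simp
  qed simp
qed

lemma bridge_pairsD:
  assumes "(y, u) \<in> bridge_pairs W w"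
  shows "y \<in> W" "u \<in> W" "w \<in> W" "E y u" "E y w" "E u w"
    "\<not> (induced (del_edge E u w) (W - {y}))\<^sup>*\<^sup>* w (root W y)"
    "(induced E (W - {y}))\<^sup>*\<^sup>* u (root W y)" "(induced E (W - {y}))\<^sup>*\<^sup>* w (root W y)"
    "y \<noteq> u" "y \<noteq> w" "u \<noteq> w"
  using assms edge_irrefl by (auto simp: bridge_pairs_def children_def)

lemma bridge_pairs_partner_unique:
  assumes A: "(y, u) \<in> bridge_pairs W w" and B: "(y, u') \<in> bridge_pairs W w"
  shows "u = u'"
proof (rule ccontr)
  assume ne: "u \<noteq> u'"
  let ?r = "root W y"
  let ?R = "induced (del_edge E u w) (W - {y})"
  note A = bridge_pairsD[OF A] and B = bridge_pairsD[OF B]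
  from B(8) show False
  proof (cases rule: rtranclp_induced_del_edge[where x = u and z = w])
    case 1
    then have "?R\<^sup>*\<^sup>* w ?r"
      by (rule induced_converse_step) (use A B ne edge_sym in \<open>auto simp: del_edge_def doubleton_eq_iff\<close>)
    with A(7) show False ..
  next
    case 2
    then have "(induced ?R (- {w}))\<^sup>*\<^sup>* u ?r"
      by (rule rtranclp_induced_avoid) (use A in auto)
    then have "(induced (del_edge E u' w) (W - {y}))\<^sup>*\<^sup>* u ?r"
      by (rule rtranclp_avoiding_del_edge) auto
    then have "(induced (del_edge E u' w) (W - {y}))\<^sup>*\<^sup>* w ?r"
      by (rule induced_converse_step) (use A B ne edge_sym in \<open>auto simp: del_edge_def doubleton_eq_iff\<close>)
    with B(7) show False ..
  next
    case 3
    with A(7) show False ..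
  qed
qed

lemma bridge_pairs_two_middles:
  assumes A: "(y, u) \<in> bridge_pairs W w" and B: "(y', u') \<in> bridge_pairs W w" and ne: "y \<noteq> y'"
  shows "y' = u"
proof (rule ccontr)
  assume ne': "y' \<noteq> u"
  note A = bridge_pairsD[OF A] and B = bridge_pairsD[OF B]
  let ?r = "root W y"
  let ?R1 = "induced (del_edge E u w) (W - {y})"
  let ?R2 = "induced (del_edge E u' w) (W - {y'})"
  have "root W y' = ?r"
    using root_edge[of y w W] root_edge[of y' w W] A B by simp
  with B(7) have n2: "\<not> ?R2\<^sup>*\<^sup>* w ?r" by simp
  have "\<not> ?R1\<^sup>*\<^sup>* y' ?r"
  proof
    assume "?R1\<^sup>*\<^sup>* y' ?r"
    then have "?R1\<^sup>*\<^sup>* w ?r"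
      by (rule induced_converse_step) (use A B ne ne' edge_sym in \<open>auto simp: del_edge_def doubleton_eq_iff\<close>)
    with A(7) show False ..
  qed
  moreover have "?R1\<^sup>*\<^sup>* u ?r"
    using A(8) by (cases rule: rtranclp_induced_del_edge[where x = u and z = w]) (use A(7) in auto)
  ultimately have "(induced ?R1 (- {w, y'}))\<^sup>*\<^sup>* u ?r"
    by (intro rtranclp_induced_avoid) (use A ne' in auto)
  then have P: "?R2\<^sup>*\<^sup>* u ?r"
    by (rule rtranclp_avoiding_del_edge) auto
  show False
  proof (cases "u' = u")
    case False
    from P have "?R2\<^sup>*\<^sup>* w ?r"
      by (rule induced_converse_step) (use A B ne' False edge_sym in \<open>auto simp: del_edge_def doubleton_eq_iff\<close>)
    with n2 show False ..
  next
    case True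
    from P have "?R2\<^sup>*\<^sup>* y ?r"
      by (rule induced_converse_step) (use A B ne ne' True in \<open>auto simp: del_edge_def doubleton_eq_iff\<close>)
    then have "?R2\<^sup>*\<^sup>* w ?r"
      by (rule induced_converse_step) (use A B ne True edge_sym in \<open>auto simp: del_edge_def doubleton_eq_iff\<close>)
    with n2 show False ..
  qed
qed

lemma bridge_pair_parent_blocks:
  assumes A: "(y, u) \<in> bridge_pairs W w" and "y0 \<in> parents W w" and ne: "y0 \<noteq> u"
  shows "\<not> (induced E (W - {y} - {y0}))\<^sup>*\<^sup>* u (root W y)"
    and "\<not> (induced (del_edge E u w) (W - {y}))\<^sup>*\<^sup>* y0 (root W y)"
proof -
  note A = bridge_pairsD[OF A]
  let ?r = "root W y"
  have y0: "y0 \<in> W" "E y0 w" "\<not> (induced E (W - {y0}))\<^sup>*\<^sup>* w (root W y0)" "w \<in> children W y0"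
    using assms(2) by (auto simp: parents_def children_def)
  have "y0 \<noteq> y"
    using y0(4) assms(1) by (auto simp: bridge_pairs_def)
  have "w \<noteq> y0"
    using y0(2) edge_irrefl by auto
  have "root W y0 = ?r"
    using root_edge[of y w W] root_edge[of y0 w W] A y0 by simp
  show "\<not> (induced E (W - {y} - {y0}))\<^sup>*\<^sup>* u ?r"
  proof
    assume "(induced E (W - {y} - {y0}))\<^sup>*\<^sup>* u ?r"
    then have "(induced E (W - {y0}))\<^sup>*\<^sup>* u ?r"
      by (rule rtranclp_induced_mono[rotated 2]) auto
    then have "(induced E (W - {y0}))\<^sup>*\<^sup>* w ?r"
      by (rule induced_converse_step) (use A ne \<open>w \<noteq> y0\<close> edge_sym in auto)
    with y0(3) \<open>root W y0 = ?r\<close> show False by simp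
  qed
  show "\<not> (induced (del_edge E u w) (W - {y}))\<^sup>*\<^sup>* y0 ?r"
  proof
    assume "(induced (del_edge E u w) (W - {y}))\<^sup>*\<^sup>* y0 ?r"
    then have "(induced (del_edge E u w) (W - {y}))\<^sup>*\<^sup>* w ?r"
      by (rule induced_converse_step)
        (use A y0 \<open>y0 \<noteq> y\<close> ne \<open>w \<noteq> y0\<close> edge_sym in \<open>auto simp: del_edge_def doubleton_eq_iff\<close>)
    with A(7) show False ..
  qed
qed

lemma bridge_pairs_parent:
  assumes A: "(y, u) \<in> bridge_pairs W w" and y0: "y0 \<in> parents W w"
  shows "y0 = u"
proof (rule ccontr)
  assume ne: "y0 \<noteq> u"
  note A = bridge_pairsD[OF A]
  note blocked = bridge_pair_parent_blocks[OF assms ne]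
  let ?r = "root W y"
  have y0': "y0 \<in> W" "y0 \<noteq> y" "y0 \<noteq> w"
    using y0 A edge_irrefl by (auto simp: parents_def children_def bridge_pairs_def)
  from rtranclp_induced_remove[OF A(8), of y0] show False
  proof (elim disjE bexE conjE)
    assume "(induced E (W - {y} - {y0}))\<^sup>*\<^sup>* u ?r"
    with blocked(1) show False ..
  next
    assume "?r = y0"
    with blocked(2) show False by simp
  next
    fix s assume s: "s \<in> W - {y} - {y0}" "E y0 s" "(induced E (W - {y} - {y0}))\<^sup>*\<^sup>* s ?r"
    from s(3) show False
    proof (cases rule: rtranclp_induced_del_edge[where x = u and z = w])
      case 1
      then have "(induced (del_edge E u w) (W - {y}))\<^sup>*\<^sup>* s ?r"
        by (rule rtranclp_induced_mono[rotated 2]) auto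
      then have "(induced (del_edge E u w) (W - {y}))\<^sup>*\<^sup>* y0 ?r"
        by (rule induced_converse_step) (use s ne y0' in \<open>auto simp: del_edge_def doubleton_eq_iff\<close>)
      with blocked(2) show False ..
    next
      case 2
      then have "(induced E (W - {y} - {y0}))\<^sup>*\<^sup>* u ?r"
        by (rule rtranclp_induced_mono[rotated 2]) (auto simp: del_edge_def)
      with blocked(1) show False ..
    next
      case 3
      then have "(induced (del_edge E u w) (W - {y}))\<^sup>*\<^sup>* w ?r"
        by (rule rtranclp_induced_mono[rotated 2]) auto
      with A(7) show False ..
    qed
  qed
qed

lemma parents_unique: "y \<in> parents W x \<Longrightarrow> parents W x \<subseteq> {y}"
  using children_unique by (auto simp: parents_def)

lemma bridge_pairs_subset:
  assumes "(y, u) \<in> bridge_pairs W w"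
  shows "bridge_pairs W w \<subseteq> {(y, u), (u, y)}"
proof
  fix t assume t: "t \<in> bridge_pairs W w"
  obtain y' u' where t_eq: "t = (y', u')" by (cases t)
  with t have B: "(y', u') \<in> bridge_pairs W w" by simp
  have "(y', u') \<in> {(y, u), (u, y)}"
  proof (cases "y' = y")
    case True
    with B bridge_pairs_partner_unique[OF assms] show ?thesis by auto
  next
    case False
    with bridge_pairs_two_middles[OF assms B] bridge_pairs_two_middles[OF B assms] show ?thesis
      by auto
  qed
  with t_eq show "t \<in> {(y, u), (u, y)}" by simp
qed

lemma card_parents_le_1: "card (parents W w) \<le> 1"
proof (cases "parents W w = {}")
  case False
  then obtain y where "y \<in> parents W w" by blast
  then have "card (parents W w) \<le> card {y}"
    by (intro card_mono parents_unique) simp_all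
  then show ?thesis by simp
qed simp

lemma card_bridge_pairs_le_2: "card (bridge_pairs W w) \<le> 2"
proof (cases "bridge_pairs W w = {}")
  case False
  then obtain y u where yu: "(y, u) \<in> bridge_pairs W w"
    by (metis ex_in_conv surj_pair)
  have "card (bridge_pairs W w) \<le> card {(y, u), (u, y)}"
    using bridge_pairs_subset[OF yu] by (rule card_mono[rotated]) simp
  also have "\<dots> \<le> 2"
    by (cases "u = y") simp_all
  finally show ?thesis .
qed simp

lemma card_bridge_pairs_of_child_le_1:
  assumes "y0 \<in> parents W w"
  shows "card (bridge_pairs W w) \<le> 1"
proof (cases "bridge_pairs W w = {}")
  case False
  then obtain y u where yu: "(y, u) \<in> bridge_pairs W w"
    by (metis ex_in_conv surj_pair)
  have "(u, y) \<notin> bridge_pairs W w"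
  proof
    assume "(u, y) \<in> bridge_pairs W w"
    then have "y0 = y" using assms by (rule bridge_pairs_parent)
    moreover have "y0 = u" using yu assms by (rule bridge_pairs_parent)
    ultimately show False using bridge_pairsD(10)[OF yu] by simp
  qed
  with bridge_pairs_subset[OF yu] have "bridge_pairs W w \<subseteq> {(y, u)}"
    by blast
  then have "card (bridge_pairs W w) \<le> card {(y, u)}"
    by (rule card_mono[rotated]) simp
  then show ?thesis by simp
qed simp

lemma parents_bridge_pairs_card: "2 * card (parents W w) + card (bridge_pairs W w) \<le> 3"
proof (cases "parents W w = {}")
  case True
  with card_bridge_pairs_le_2[of W w] show ?thesis by simp
next
  case False
  then obtain y0 where "y0 \<in> parents W w" by blast
  with card_parents_le_1[of W w] card_bridge_pairs_of_child_le_1 show ?thesis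
    by fastforce
qed

lemma unlinked_path_bridge_pair:
  assumes path: "path2 E x y z" and W: "x \<in> W" "y \<in> W" "z \<in> W"
    and unlinked: "\<not> event_A E x z (W - {y})"
    and not_children: "x \<notin> children W y" "z \<notin> children W y"
  shows "(y, x) \<in> bridge_pairs W z \<or> (y, z) \<in> bridge_pairs W x"
proof (rule ccontr)
  assume no_bridge: "\<not> ?thesis"
  let ?r = "root W y"
  let ?R = "induced (del_edge E x z) (W - {y})"
  have xyz: "x \<noteq> z" "E y x" "E y z"
    using path edge_sym by (auto simp: path2_def)
  have reach: "(induced E (W - {y}))\<^sup>*\<^sup>* x ?r" "(induced E (W - {y}))\<^sup>*\<^sup>* z ?r"
    using not_children W xyz by (auto simp: children_def)
  have "?R\<^sup>*\<^sup>* x ?r \<and> ?R\<^sup>*\<^sup>* z ?r"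
  proof (cases "E x z")
    case True
    have "del_edge E z x = del_edge E x z"
      by (auto simp: del_edge_def insert_commute fun_eq_iff)
    with no_bridge True W xyz not_children edge_sym show ?thesis
      by (auto simp: bridge_pairs_def)
  next
    case False
    then have "induced E (W - {y}) a b \<Longrightarrow> ?R a b" for a b
      by (auto simp: induced_def del_edge_def doubleton_eq_iff dest: edge_sym)
    with reach show ?thesis
      by (metis mono_rtranclp)
  qed
  then have "?R\<^sup>*\<^sup>* x z"
    using rtranclp_induced_sym[OF symp_del_edge[OF symp_E]] by (meson rtranclp_trans)
  with xyz(1) have "event_A E x z (W - {y})"
    by (rule event_A_if_rtranclp)
  with unlinked show False ..
qed

lemma finite_unlinked_paths: "W \<subseteq> V \<Longrightarrow> finite (unlinked_paths W)"
  by (rule finite_subset[of _ "W \<times> Pow W"])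
    (auto simp: unlinked_paths_def intro: finite_subset[OF _ finite_V])

lemma unlinked_paths_cover:
  "unlinked_paths W \<subseteq>
     (\<lambda>(x, y, z). (y, {x, z})) ` (SIGMA x:W. SIGMA y:parents W x. {z \<in> W. E y z \<and> z \<noteq> x}) \<union>
     (\<lambda>(w, y, u). (y, {u, w})) ` (SIGMA w:W. bridge_pairs W w)"
    (is "_ \<subseteq> ?g ` ?C \<union> ?h ` ?B")
proof
  fix t assume "t \<in> unlinked_paths W"
  then obtain x y z where t: "t = (y, {x, z})" and path: "path2 E x y z"
    and W: "x \<in> W" "y \<in> W" "z \<in> W" and unlinked: "\<not> event_A E x z (W - {y})"
    by (auto simp: unlinked_paths_def)
  have xyz: "x \<noteq> z" "E y x" "E y z"
    using path edge_sym by (auto simp: path2_def)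
  consider "x \<in> children W y" | "z \<in> children W y"
    | "(y, x) \<in> bridge_pairs W z" | "(y, z) \<in> bridge_pairs W x"
    using unlinked_path_bridge_pair[OF path W unlinked] by blast
  then show "t \<in> ?g ` ?C \<union> ?h ` ?B"
  proof cases
    case 1
    with W xyz have "(x, y, z) \<in> ?C" by (auto simp: parents_def)
    then have "t \<in> ?g ` ?C" unfolding t by (rule rev_image_eqI) simp
    then show ?thesis ..
  next
    case 2
    with W xyz have "(z, y, x) \<in> ?C" by (auto simp: parents_def)
    then have "t \<in> ?g ` ?C" unfolding t by (rule rev_image_eqI) (simp add: insert_commute)
    then show ?thesis ..
  next
    case 3
    with W have "(z, y, x) \<in> ?B" by simp
    then have "t \<in> ?h ` ?B" unfolding t by (rule rev_image_eqI) simp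
    then show ?thesis ..
  next
    case 4
    with W have "(x, y, z) \<in> ?B" by simp
    then have "t \<in> ?h ` ?B" unfolding t by (rule rev_image_eqI) (simp add: insert_commute)
    then show ?thesis ..
  qed
qed

lemma card_neighbours_div_degree_le_1:
  "real (card {z \<in> W. E y z \<and> z \<noteq> x}) / real (degree V E y) \<le> 1"
  using card_neighbours_le_degree[of W y x] by (cases "degree V E y = 0") (simp_all add: divide_le_eq_1)

lemma sum_child_paths_le:
  assumes "W \<subseteq> V"
  shows "(\<Sum>(y, _)\<in>(\<lambda>(x, y, z). (y, {x, z})) `
      (SIGMA x:W. SIGMA y:parents W x. {z \<in> W. E y z \<and> z \<noteq> x}). 1 / real (degree V E y))
    \<le> (\<Sum>x\<in>W. real (card (parents W x)))"
proof -
  have fin: "finite W" using finite_subset[OF assms finite_V] .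
  have fin_parents: "finite (parents W x)" for x
    using fin by (simp add: parents_def)
  have "(\<Sum>(y, _)\<in>(\<lambda>(x, y, z). (y, {x, z})) `
      (SIGMA x:W. SIGMA y:parents W x. {z \<in> W. E y z \<and> z \<noteq> x}). 1 / real (degree V E y))
    \<le> (\<Sum>(x, y, z)\<in>(SIGMA x:W. SIGMA y:parents W x. {z \<in> W. E y z \<and> z \<noteq> x}). 1 / real (degree V E y))"
    by (rule order_trans[OF sum_image_le]) (use fin in \<open>auto simp: parents_def intro!: sum_mono\<close>)
  also have "\<dots> = (\<Sum>x\<in>W. \<Sum>y\<in>parents W x. real (card {z \<in> W. E y z \<and> z \<noteq> x}) / real (degree V E y))"
    using fin by (simp add: sum.Sigma[symmetric] fin_parents)
  also have "\<dots> \<le> (\<Sum>x\<in>W. \<Sum>y\<in>parents W x. 1)"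
    by (intro sum_mono card_neighbours_div_degree_le_1)
  finally show ?thesis by simp
qed

lemma sum_bridge_paths_le:
  assumes "W \<subseteq> V"
  shows "(\<Sum>(y, _)\<in>(\<lambda>(w, y, u). (y, {u, w})) ` (SIGMA w:W. bridge_pairs W w). 1 / real (degree V E y))
    \<le> (\<Sum>w\<in>W. real (card (bridge_pairs W w)) / 2)"
proof -
  have fin: "finite W" using finite_subset[OF assms finite_V] .
  have fin_bp: "finite (bridge_pairs W w)" for w
    by (rule finite_subset[of _ "W \<times> W"]) (use fin in \<open>auto simp: bridge_pairs_def\<close>)
  have "(\<Sum>(y, _)\<in>(\<lambda>(w, y, u). (y, {u, w})) ` (SIGMA w:W. bridge_pairs W w). 1 / real (degree V E y))
    \<le> (\<Sum>(w, y, u)\<in>(SIGMA w:W. bridge_pairs W w). 1 / real (degree V E y))"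
    by (rule order_trans[OF sum_image_le]) (use fin fin_bp in \<open>auto intro!: sum_mono\<close>)
  also have "\<dots> \<le> (\<Sum>(w, y, u)\<in>(SIGMA w:W. bridge_pairs W w). 1 / 2)"
  proof (rule sum_mono, clarify)
    fix w y u assume yu: "(y, u) \<in> bridge_pairs W w"
    have "2 \<le> degree V E y"
      using two_le_degree[OF bridge_pairsD(4,5,12)[OF yu]] .
    then show "1 / real (degree V E y) \<le> 1 / 2" by simp
  qed
  also have "\<dots> = (\<Sum>w\<in>W. real (card (bridge_pairs W w)) / 2)"
    using fin fin_bp by (simp add: sum_divide_distrib[symmetric])
  finally show ?thesis .
qed

lemma sum_unlinked_paths_le:
  assumes "W \<subseteq> V"
  shows "(\<Sum>(y, _)\<in>unlinked_paths W. 1 / real (degree V E y)) \<le> 3 / 2 * real (card W)"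
proof -
  define f :: "'a \<times> 'a set \<Rightarrow> real" where "f = (\<lambda>(y, _). 1 / real (degree V E y))"
  define P where "P = (\<lambda>(x, y, z). (y, {x, z})) ` (SIGMA x:W. SIGMA y:parents W x. {z \<in> W. E y z \<and> z \<noteq> x})"
  define Q where "Q = (\<lambda>(w, y, u). (y, {u, w})) ` (SIGMA w:W. bridge_pairs W w)"
  have fin: "finite P" "finite Q"
  proof -
    have "P \<subseteq> W \<times> Pow W" "Q \<subseteq> W \<times> Pow W"
      by (auto simp: P_def Q_def parents_def bridge_pairs_def)
    moreover have "finite (W \<times> Pow W)"
      using finite_subset[OF assms finite_V] by simp
    ultimately show "finite P" "finite Q"
      by (auto intro: finite_subset)
  qed
  have f_nonneg: "0 \<le> f t" for t by (simp add: f_def split: prod.split)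
  have "sum f (unlinked_paths W) \<le> sum f (P \<union> Q)"
    using unlinked_paths_cover[of W] fin f_nonneg by (intro sum_mono2) (auto simp: P_def Q_def)
  also have "\<dots> \<le> sum f P + sum f Q"
  proof -
    have "0 \<le> sum f (P \<inter> Q)" by (rule sum_nonneg) (rule f_nonneg)
    with sum.union_inter[OF fin, of f] show ?thesis by linarith
  qed
  also have "\<dots> \<le> (\<Sum>w\<in>W. real (card (parents W w))) + (\<Sum>w\<in>W. real (card (bridge_pairs W w)) / 2)"
    using sum_child_paths_le[OF assms] sum_bridge_paths_le[OF assms]
    unfolding f_def P_def Q_def by (rule add_mono)
  also have "\<dots> \<le> (\<Sum>w\<in>W. 3 / 2)"
    unfolding sum.distrib[symmetric]
  proof (rule sum_mono)
    fix w
    have "real (2 * card (parents W w) + card (bridge_pairs W w)) \<le> 3"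
      using parents_bridge_pairs_card by (metis of_nat_le_iff of_nat_numeral)
    then show "real (card (parents W w)) + real (card (bridge_pairs W w)) / 2 \<le> 3 / 2"
      by simp
  qed
  finally show ?thesis by (simp add: f_def)
qed

section \<open>Averaging over a random vertex set\<close>

lemma prob_unlinked_path:
  assumes path: "path2 E x y z"
  shows "(\<Sum>W\<in>Pow V. subset_weight p V W *
      (if x \<in> W \<and> y \<in> W \<and> z \<in> W \<and> \<not> event_A E x z (W - {y}) then 1 else 0))
    = p ^ 3 * (1 - prob_A V E p x y z)"
proof -
  let ?g = "\<lambda>U. if event_A E x z U then 0 else 1 :: real"
  have xyz: "x \<noteq> y" "y \<noteq> z" "x \<noteq> z" "{x, y, z} \<subseteq> V"
    using path edge_in_V by (auto simp: path2_def)
  have "(if x \<in> W \<and> y \<in> W \<and> z \<in> W \<and> \<not> event_A E x z (W - {y}) then 1 else 0) =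
      (if {x, y, z} \<subseteq> W then ?g (W - {x, y, z}) else 0)" for W
  proof -
    have "W - {y} - {x, z} = W - {x, y, z}" by auto
    then show ?thesis
      using event_A_Diff_ends[of E x z "W - {y}"] by simp
  qed
  then have "(\<Sum>W\<in>Pow V. subset_weight p V W *
      (if x \<in> W \<and> y \<in> W \<and> z \<in> W \<and> \<not> event_A E x z (W - {y}) then 1 else 0))
    = p ^ card {x, y, z} * (\<Sum>U\<in>Pow (V - {x, y, z}). subset_weight p (V - {x, y, z}) U * ?g U)"
    using sum_subset_weight_superset[OF finite_V xyz(4), of p ?g] by simp
  also have "(\<Sum>U\<in>Pow (V - {x, y, z}). subset_weight p (V - {x, y, z}) U * ?g U) =
      (\<Sum>U\<in>Pow (V - {y}). subset_weight p (V - {y}) U * ?g U)"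
  proof -
    have "V - {y} - {x, z} = V - {x, y, z}" by auto
    moreover have "?g U = ?g (U - {x, z})" for U
      using event_A_Diff_ends[of E x z U] by simp
    ultimately show ?thesis
      using sum_subset_weight_indep[of "V - {y}" "{x, z}" ?g p] finite_V xyz by auto
  qed
  finally show ?thesis
    using xyz one_minus_prob_A[OF finite_V] by (simp add: power3_eq_cube mult_ac)
qed

lemma nonadm_path_prob_gt:
  assumes t: "t \<in> nonadm_paths V E p \<epsilon>" and p: "0 < p" "p < 1"
  shows "p ^ 3 * \<epsilon> < (\<Sum>W\<in>Pow V. subset_weight p V W * (if t \<in> unlinked_paths W then 1 else 0))"
proof -
  obtain x y z where t_eq: "t = (y, {x, z})" and path: "path2 E x y z"
    and nonadm: "\<not> admissible V E p \<epsilon> x y z"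
    using t by (auto simp: nonadm_paths_def)
  have "p ^ 3 * \<epsilon> < p ^ 3 * (1 - prob_A V E p x y z)"
    using nonadm p by (simp add: admissible_def)
  also have "\<dots> = (\<Sum>W\<in>Pow V. subset_weight p V W *
      (if x \<in> W \<and> y \<in> W \<and> z \<in> W \<and> \<not> event_A E x z (W - {y}) then 1 else 0))"
    using prob_unlinked_path[OF path] by simp
  also have "\<dots> \<le> (\<Sum>W\<in>Pow V. subset_weight p V W * (if t \<in> unlinked_paths W then 1 else 0))"
  proof (rule sum_mono)
    fix W
    have "x \<in> W \<and> y \<in> W \<and> z \<in> W \<and> \<not> event_A E x z (W - {y}) \<Longrightarrow> t \<in> unlinked_paths W"
      unfolding t_eq unlinked_paths_def using path by blast
    then show "subset_weight p V W * (if x \<in> W \<and> y \<in> W \<and> z \<in> W \<and> \<not> event_A E x z (W - {y}) then 1 else 0)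
        \<le> subset_weight p V W * (if t \<in> unlinked_paths W then 1 else 0)"
      using subset_weight_nonneg[of p V W] p by auto
  qed
  finally show ?thesis .
qed

lemma nonadm_paths_subset: "nonadm_paths V E p \<epsilon> \<subseteq> V \<times> Pow V"
  using edge_in_V by (auto simp: nonadm_paths_def path2_def)

lemma nonadm_path_two_le_degree:
  "(y, e) \<in> nonadm_paths V E p \<epsilon> \<Longrightarrow> 2 \<le> degree V E y"
  using two_le_degree edge_sym by (fastforce simp: nonadm_paths_def path2_def)

lemma sum_nonadm_paths_less:
  assumes p: "0 < p" "p < 1" and ne: "nonadm_paths V E p \<epsilon> \<noteq> {}"
  shows "p ^ 3 * \<epsilon> * (\<Sum>(y, _)\<in>nonadm_paths V E p \<epsilon>. 1 / real (degree V E y))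
    < 3 / 2 * p * real (card V)"
proof -
  define f :: "'a \<times> 'a set \<Rightarrow> real" where "f = (\<lambda>(y, _). 1 / real (degree V E y))"
  let ?N = "nonadm_paths V E p \<epsilon>"
  let ?w = "subset_weight p V"
  have fin: "finite ?N"
    using nonadm_paths_subset finite_V by (meson finite_Pow_iff finite_SigmaI finite_subset)
  have "p ^ 3 * \<epsilon> * sum f ?N = (\<Sum>t\<in>?N. f t * (p ^ 3 * \<epsilon>))"
    by (simp add: sum_distrib_left mult.commute)
  also have "\<dots> < (\<Sum>t\<in>?N. f t * (\<Sum>W\<in>Pow V. ?w W * (if t \<in> unlinked_paths W then 1 else 0)))"
  proof (rule sum_strict_mono[OF fin ne])
    fix t assume t: "t \<in> ?N"
    obtain y e where t_eq: "t = (y, e)" by fastforce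
    with t have "2 \<le> degree V E y"
      by (simp add: nonadm_path_two_le_degree)
    with t_eq have "0 < f t"
      by (simp add: f_def)
    with nonadm_path_prob_gt[OF t p]
    show "f t * (p ^ 3 * \<epsilon>) < f t * (\<Sum>W\<in>Pow V. ?w W * (if t \<in> unlinked_paths W then 1 else 0))"
      by (rule mult_strict_left_mono)
  qed
  also have "\<dots> = (\<Sum>W\<in>Pow V. ?w W * sum f (?N \<inter> unlinked_paths W))"
    by (simp add: sum_distrib_left sum.swap[of _ ?N] sum.inter_restrict[OF fin] mult_ac if_distrib
        cong: if_cong)
  also have "\<dots> \<le> (\<Sum>W\<in>Pow V. ?w W * (3 / 2 * real (card W)))"
  proof (rule sum_mono)
    fix W assume "W \<in> Pow V"
    then have "sum f (?N \<inter> unlinked_paths W) \<le> 3 / 2 * real (card W)"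
      using sum_mono2[of "unlinked_paths W" "?N \<inter> unlinked_paths W" f] sum_unlinked_paths_le[of W]
        finite_unlinked_paths[of W] by (force simp: f_def)
    moreover have "0 \<le> ?w W"
      using p by (simp add: subset_weight_nonneg)
    ultimately show "?w W * sum f (?N \<inter> unlinked_paths W) \<le> ?w W * (3 / 2 * real (card W))"
      by (rule mult_left_mono)
  qed
  also have "\<dots> = 3 / 2 * (\<Sum>W\<in>Pow V. ?w W * real (card W))"
    by (simp add: sum_distrib_left mult.left_commute)
  also have "\<dots> = 3 / 2 * p * real (card V)"
    using sum_subset_weight_card[OF finite_V, of p] by simp
  finally show ?thesis by (simp add: f_def)
qed

end

theorem lemma3p4:
  fixes V :: "'a set" and E :: "'a \<Rightarrow> 'a \<Rightarrow> bool" and p \<epsilon> :: real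
  assumes "simple_graph V E" and "V \<noteq> {}"
    and "0 < p" and "p < 1" and "0 < \<epsilon>" and "\<epsilon> < 1"
  shows "(\<Sum>(y, _)\<in>nonadm_paths V E p \<epsilon>. 1 / real (degree V E y))
           < 3 * real (card V) / (2 * p^2 * \<epsilon>)"
proof -
  interpret fin_graph V E by (rule fin_graph.intro) fact
  let ?S = "\<Sum>(y, _)\<in>nonadm_paths V E p \<epsilon>. 1 / real (degree V E y)"
  have pos: "0 < 2 * p ^ 2 * \<epsilon>" "0 < real (card V)"
    using assms(2-5) finite_V by (auto simp: card_gt_0_iff)
  show ?thesis
  proof (cases "nonadm_paths V E p \<epsilon> = {}")
    case True
    with pos show ?thesis by simp
  next
    case False
    have "p * (?S * (2 * p ^ 2 * \<epsilon>)) = 2 * (p ^ 3 * \<epsilon> * ?S)"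
      by (simp add: power2_eq_square power3_eq_cube mult_ac)
    also have "\<dots> < p * (3 * real (card V))"
      using sum_nonadm_paths_less[OF assms(3,4) False] by simp
    finally have "?S * (2 * p ^ 2 * \<epsilon>) < 3 * real (card V)"
      using assms(3) by simp
    with pos show ?thesis by (simp add: pos_less_divide_eq)
  qed
qed

end
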